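(* Let $v_n\rightharpoonup0$ weakly in $W^{1,2}(\Omega;\mathbb{R}^m)$ and let $\alpha_n>0$ with $\alpha_nv_n$ bounded in $W^{1,\infty}$. Let $(\tilde\pi,\tilde\mu_x,\tilde\lambda_x)$ be representation measures for $(\alpha_n,v_n)$ along a subsequence (not relabeled), and let $R=\sup_n\|\alpha_n\nabla v_n\|_\infty$. Let $x_0\in\Omega\cup\overline{\partial\Omega_1}$ and $r>0$, and let $\theta^r_k\in C^\infty_c(B(x_0,r))$ be uniformly bounded with $\theta^r_k\to\chi_{B_\Omega(x_0,r)}$ pointwise on $\overline\Omega$. Then $$\lim_{k\to\infty}\lim_{n\to\infty}\int_{B_\Omega(x_0,r)}\mathcal F\big(x_0,\alpha_n,\theta^r_k(x)\nabla v_n(x)\big)\,dx=\int_{B_\Omega(x_0,r)}\tilde{\mathcal I}(x_0,x)\,d\tilde\pi(x),$$ where $$\tilde{\mathcal I}(x_0,x)=\int_{\overline{\mathcal B(0,R)}}U(x_0,F)\,d\tilde\mu_x(F)+\tfrac12\int_{\mathcal S}(\mathsf L(x_0)F,F)\,d\tilde\lambda_x(F).$$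
   Context: $\Omega\subset\mathbb{R}^d$ is a bounded domain with $C^1$ boundary, and $\partial\Omega_1\subset\partial\Omega$ is relatively open. $B_\Omega(x_0,r)=B(x_0,r)\cap\overline\Omega$. $(A,B)=\mathrm{tr}(AB^T)$ and $|\cdot|$ is the Frobenius norm. $U$ is continuous on $\overline\Omega\times\mathbb{R}^{m\times d}$ with $U(x,0)=0$, and $\mathsf L$ is a continuous fourth-order tensor field on $\overline\Omega$. Notation: - $\mathcal F(x,\alpha,G)=U(x,\alpha G)|G|^2+\tfrac12(\mathsf L(x)G,G)$; - $\mathcal I(x,\mu,\lambda)=\int U(x,F)\,d\mu(F)+\tfrac12\int_{\mathcal S}(\mathsf L(x)F,F)\,d\lambda(F)$, with $\mathcal S$ the unit sphere of $\mathbb{R}^{m\times d}$. Representation measures: $\tilde\pi$ is a nonnegative Radon measure on $\overline\Omega$, $\tilde\mu_x$ is a probability measure on $\overline{\mathcal B(0,R)}$ and $\tilde\lambda_x$ is a probability measure on $\mathcal S$, such that along the subsequence $\mathcal F(x,\alpha_n,\nabla v_n)\,dx\overset{*}{\rightharpoonup}\mathcal I(x,\tilde\mu_x,\tilde\lambda_x)\,d\tilde\pi$ as measures on $\overline\Omega$, for every continuous $U$ vanishing at $G=0$ and every continuous $\mathsf L$. *)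

theory Defs
  imports "HOL-Analysis.Analysis" "HOL-Probability.Probability"
begin

text \<open>Points of R^d are of type real^'d, matrices of R^(m x d) are of type real^'d^'m
  (row i is the gradient of the i-th component).  On this type norm is the Frobenius
  norm and inner is the Frobenius inner product (A,B) = tr(A B^T).\<close>

definition C1_fun :: "('a::euclidean_space \<Rightarrow> real) \<Rightarrow> bool" where
  "C1_fun g \<longleftrightarrow> (\<exists>D. (\<forall>x. (g has_derivative blinfun_apply (D x)) (at x)) \<and> continuous_on UNIV D)"

text \<open>Locally near every boundary point, after a rotation (direction e), the domain is the
  region above the graph of a C^1 function on the hyperplane orthogonal to e.\<close>
definition C1_boundary :: "'a::euclidean_space set \<Rightarrow> bool" where
  "C1_boundary \<Omega> \<longleftrightarrow> (\<forall>p\<in>frontier \<Omega>. \<exists>r>0. \<exists>e g. norm e = 1 \<and> C1_fun g \<and>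
      \<Omega> \<inter> ball p r = {x\<in>ball p r. x \<bullet> e > g (x - (x \<bullet> e) *\<^sub>R e)})"

fun pdiff :: "'d list \<Rightarrow> (real^'d \<Rightarrow> real) \<Rightarrow> real^'d \<Rightarrow> real" where
  "pdiff [] f = f"
| "pdiff (j # js) f = pdiff js (\<lambda>x. frechet_derivative f (at x) (axis j 1))"

definition smooth :: "(real^'d \<Rightarrow> real) \<Rightarrow> bool" where
  "smooth f \<longleftrightarrow> (\<forall>js x. pdiff js f differentiable (at x))"

definition tsupport :: "('a::topological_space \<Rightarrow> real) \<Rightarrow> 'a set" where
  "tsupport f = closure {x. f x \<noteq> 0}"

definition Cc_inf :: "(real^'d) set \<Rightarrow> (real^'d \<Rightarrow> real) set" where
  "Cc_inf A = {f. smooth f \<and> compact (tsupport f) \<and> tsupport f \<subseteq> A}"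

definition L2 :: "(real^'d) set \<Rightarrow> (real^'d \<Rightarrow> 'b::euclidean_space) \<Rightarrow> bool" where
  "L2 \<Omega> f \<longleftrightarrow> f \<in> borel_measurable (lebesgue_on \<Omega>) \<and>
      set_integrable lebesgue \<Omega> (\<lambda>x. (norm (f x))\<^sup>2)"

text \<open>Dv is the weak gradient of v on \<Omega>: (Dv x) $ i $ j = d_j v_i (x).\<close>
definition weak_gradient :: "(real^'d) set \<Rightarrow> (real^'d \<Rightarrow> real^'m) \<Rightarrow> (real^'d \<Rightarrow> real^'d^'m) \<Rightarrow> bool" where
  "weak_gradient \<Omega> v Dv \<longleftrightarrow>
     (\<forall>\<phi>\<in>Cc_inf \<Omega>. \<forall>i j.
        set_integrable lebesgue \<Omega> (\<lambda>x. v x $ i * frechet_derivative \<phi> (at x) (axis j 1)) \<and>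
        set_integrable lebesgue \<Omega> (\<lambda>x. Dv x $ i $ j * \<phi> x) \<and>
        (LINT x:\<Omega>|lebesgue. v x $ i * frechet_derivative \<phi> (at x) (axis j 1))
          = - (LINT x:\<Omega>|lebesgue. Dv x $ i $ j * \<phi> x))"

definition W12 :: "(real^'d) set \<Rightarrow> (real^'d \<Rightarrow> real^'m) \<Rightarrow> (real^'d \<Rightarrow> real^'d^'m) \<Rightarrow> bool" where
  "W12 \<Omega> v Dv \<longleftrightarrow> L2 \<Omega> v \<and> L2 \<Omega> Dv \<and> weak_gradient \<Omega> v Dv"

text \<open>Weak convergence to 0 in the Hilbert space W^{1,2}(\<Omega>;R^m) (by the Riesz
  representation, testing against the W^{1,2} inner product of all elements).\<close>
definition W12_weak_to_zero :: "(real^'d) set \<Rightarrow> (nat \<Rightarrow> real^'d \<Rightarrow> real^'m) \<Rightarrow> (nat \<Rightarrow> real^'d \<Rightarrow> real^'d^'m) \<Rightarrow> bool" where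
  "W12_weak_to_zero \<Omega> v Dv \<longleftrightarrow> (\<forall>n. W12 \<Omega> (v n) (Dv n)) \<and>
     (\<forall>w Dw. W12 \<Omega> w Dw \<longrightarrow>
        (\<lambda>n. (LINT x:\<Omega>|lebesgue. v n x \<bullet> w x + Dv n x \<bullet> Dw x)) \<longlonglongrightarrow> 0)"

definition Fdens :: "(real^'d \<Rightarrow> real^'d^'m \<Rightarrow> real) \<Rightarrow> (real^'d \<Rightarrow> ((real^'d^'m) \<Rightarrow>\<^sub>L (real^'d^'m)))
     \<Rightarrow> real^'d \<Rightarrow> real \<Rightarrow> real^'d^'m \<Rightarrow> real" where
  "Fdens U L x \<alpha> G = U x (\<alpha> *\<^sub>R G) * (norm G)\<^sup>2 + 1/2 * (L x G \<bullet> G)"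

definition Iint :: "(real^'d \<Rightarrow> real^'d^'m \<Rightarrow> real) \<Rightarrow> (real^'d \<Rightarrow> ((real^'d^'m) \<Rightarrow>\<^sub>L (real^'d^'m)))
     \<Rightarrow> real^'d \<Rightarrow> (real^'d^'m) measure \<Rightarrow> (real^'d^'m) measure \<Rightarrow> real" where
  "Iint U L x \<mu> \<nu> = (\<integral>F. U x F \<partial>\<mu>) + 1/2 * (LINT F:sphere 0 1|\<nu>. L x F \<bullet> F)"

definition repr_measures ::
  "(real^'d) set \<Rightarrow> (nat \<Rightarrow> real) \<Rightarrow> (nat \<Rightarrow> real^'d \<Rightarrow> real^'d^'m) \<Rightarrow> real
   \<Rightarrow> (real^'d) measure \<Rightarrow> (real^'d \<Rightarrow> (real^'d^'m) measure) \<Rightarrow> (real^'d \<Rightarrow> (real^'d^'m) measure) \<Rightarrow> bool" where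
  "repr_measures \<Omega> \<alpha> Dv R \<pi> \<mu> \<nu> \<longleftrightarrow>
     sets \<pi> = sets borel \<and> finite_measure \<pi> \<and> emeasure \<pi> (- closure \<Omega>) = 0 \<and>
     (\<forall>x\<in>closure \<Omega>.
        prob_space (\<mu> x) \<and> sets (\<mu> x) = sets borel \<and> emeasure (\<mu> x) (- cball 0 R) = 0 \<and>
        prob_space (\<nu> x) \<and> sets (\<nu> x) = sets borel \<and> emeasure (\<nu> x) (- sphere 0 1) = 0) \<and>
     (\<forall>U L. continuous_on (closure \<Omega> \<times> UNIV) (\<lambda>(x, G). U x G) \<and> (\<forall>x\<in>closure \<Omega>. U x 0 = 0) \<and>
            continuous_on (closure \<Omega>) L \<longrightarrow>
        integrable \<pi> (\<lambda>x. Iint U L x (\<mu> x) (\<nu> x)) \<and>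
        (\<forall>\<phi>. continuous_on (closure \<Omega>) \<phi> \<longrightarrow>
           (\<lambda>n. (LINT x:\<Omega>|lebesgue. \<phi> x * Fdens U L x (\<alpha> n) (Dv n x)))
             \<longlonglongrightarrow> (\<integral>x. \<phi> x * Iint U L x (\<mu> x) (\<nu> x) \<partial>\<pi>)))"

end

theory Submission
  imports Defs
begin

(* For fixed k the data theta_k(x)^2 U(x0, theta_k(x) G) and theta_k(x)^2 L(x0) are continuous
   and admissible in the definition of representation measures, and for them F(x, alpha, G) is
   F(x0, alpha, theta_k(x) G).  Hence the inner limit over n exists and equals the pi-integral of
   theta_k^2 I(x0, U(x0, theta_k .)), once the integral over Omega is replaced by the one over
   B_Omega(x0, r): the two differ only on the boundary of the C^1 domain, which is Lebesgue-null,
   and outside the ball, where theta_k vanishes.  As k -> oo, theta_k tends boundedly to the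
   indicator of B_Omega(x0, r) and every mu_x lives on the ball of radius R, so dominated
   convergence, first in mu_x and then in pi, yields the outer limit. *)

lemma integral_cong_AE_lebesgue:
  fixes f g :: "'a::euclidean_space \<Rightarrow> real"
  assumes "AE x in lebesgue. f x = g x"
  shows "integral\<^sup>L lebesgue f = integral\<^sup>L lebesgue g"
proof (cases "f \<in> borel_measurable lebesgue")
  case True
  then have "g \<in> borel_measurable lebesgue" using borel_measurable_AE assms by blast
  then show ?thesis using True assms integral_cong_AE by blast
next
  case False
  have "AE x in lebesgue. g x = f x" using assms by auto
  then have "g \<notin> borel_measurable lebesgue" using borel_measurable_AE[of g f] False by blast
  then have "\<not> integrable lebesgue g" "\<not> integrable lebesgue f"
    using False borel_measurable_integrable by blast+
  then show ?thesis using not_integrable_integral_eq by metis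
qed

lemma C1_fun_differentiable: "C1_fun g \<Longrightarrow> g differentiable (at x)"
  unfolding C1_fun_def differentiable_def by blast

lemma negligible_graph_over_hyperplane:
  fixes g :: "'a::euclidean_space \<Rightarrow> real"
  assumes e: "norm e = 1" and g: "\<And>x. g differentiable (at x)"
  shows "negligible {x. x \<bullet> e = g (x - (x \<bullet> e) *\<^sub>R e)}"
proof (rule negligible_subset)
  show "negligible ((\<lambda>y. y + g y *\<^sub>R e) ` {y. e \<bullet> y = 0})"
  proof (rule negligible_differentiable_image_negligible)
    show "negligible {y. e \<bullet> y = 0}" using e by (intro negligible_hyperplane) auto
    show "(\<lambda>y. y + g y *\<^sub>R e) differentiable_on {y. e \<bullet> y = 0}"
      using g by (intro differentiable_at_imp_differentiable_on differentiable_add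
          differentiable_ident differentiable_scaleR differentiable_const)
  qed simp
  have ee: "e \<bullet> e = 1" using e by (simp add: dot_square_norm)
  show "{x. x \<bullet> e = g (x - (x \<bullet> e) *\<^sub>R e)} \<subseteq> (\<lambda>y. y + g y *\<^sub>R e) ` {y. e \<bullet> y = 0}"
  proof
    fix x assume x: "x \<in> {x. x \<bullet> e = g (x - (x \<bullet> e) *\<^sub>R e)}"
    define y where "y = x - (x \<bullet> e) *\<^sub>R e"
    have "e \<bullet> y = 0" unfolding y_def using ee by (simp add: inner_diff_right inner_commute)
    moreover have "x = y + g y *\<^sub>R e" using x unfolding y_def by simp
    ultimately show "x \<in> (\<lambda>y. y + g y *\<^sub>R e) ` {y. e \<bullet> y = 0}" by blast
  qed
qed

lemma frontier_subset_graph: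
  fixes g :: "'a::euclidean_space \<Rightarrow> real"
  assumes "open \<Omega>" and g: "continuous_on UNIV g"
    and \<Omega>: "\<Omega> \<inter> ball p r = {x\<in>ball p r. x \<bullet> e > g (x - (x \<bullet> e) *\<^sub>R e)}"
  shows "frontier \<Omega> \<inter> ball p r \<subseteq> {x. x \<bullet> e = g (x - (x \<bullet> e) *\<^sub>R e)}"
proof
  define \<psi> where "\<psi> x = x \<bullet> e - g (x - (x \<bullet> e) *\<^sub>R e)" for x
  have "continuous_on UNIV \<psi>"
    unfolding \<psi>_def by (intro continuous_intros continuous_on_compose2[OF g]) auto
  then have open_neg: "open ({x. \<psi> x < 0} \<inter> ball p r)"
    by (intro open_Int open_Collect_less continuous_on_const open_ball)
  fix x assume x: "x \<in> frontier \<Omega> \<inter> ball p r"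
  then have "x \<in> closure \<Omega> - \<Omega>"
    using \<open>open \<Omega>\<close> by (simp add: frontier_def interior_open)
  then have "x \<notin> \<Omega>" "x \<in> closure \<Omega>" by simp_all
  then have "x \<notin> {x\<in>ball p r. x \<bullet> e > g (x - (x \<bullet> e) *\<^sub>R e)}" using \<Omega> by (metis IntD1)
  then have "\<psi> x \<le> 0" using x unfolding \<psi>_def by simp
  moreover have "\<not> \<psi> x < 0"
  proof
    assume "\<psi> x < 0"
    then obtain z where "z \<in> \<Omega>" "z \<in> {x. \<psi> x < 0} \<inter> ball p r"
      using open_Int_closure_eq_empty[OF open_neg] x \<open>x \<in> closure \<Omega>\<close> by blast
    then have "z \<in> {x\<in>ball p r. x \<bullet> e > g (x - (x \<bullet> e) *\<^sub>R e)}" using \<Omega> by blast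
    then show False using \<open>z \<in> {x. \<psi> x < 0} \<inter> ball p r\<close> unfolding \<psi>_def by simp
  qed
  ultimately show "x \<in> {x. x \<bullet> e = g (x - (x \<bullet> e) *\<^sub>R e)}" unfolding \<psi>_def by simp
qed

lemma negligible_frontier_C1_boundary:
  fixes \<Omega> :: "'a::euclidean_space set"
  assumes "open \<Omega>" "C1_boundary \<Omega>"
  shows "negligible (frontier \<Omega>)"
proof (rule locally_negligible_alt[THEN iffD2], intro ballI)
  fix p assume p: "p \<in> frontier \<Omega>"
  then obtain r e g where "r > 0" "norm e = 1" "C1_fun g"
    and \<Omega>: "\<Omega> \<inter> ball p r = {x\<in>ball p r. x \<bullet> e > g (x - (x \<bullet> e) *\<^sub>R e)}"
    using assms(2) unfolding C1_boundary_def by blast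
  then have "continuous_on UNIV g"
    by (simp add: C1_fun_differentiable continuous_at_imp_continuous_on
        differentiable_imp_continuous_within)
  then have "frontier \<Omega> \<inter> ball p r \<subseteq> {x. x \<bullet> e = g (x - (x \<bullet> e) *\<^sub>R e)}"
    by (rule frontier_subset_graph[OF assms(1) _ \<Omega>])
  moreover have "negligible {x. x \<bullet> e = g (x - (x \<bullet> e) *\<^sub>R e)}"
    using \<open>norm e = 1\<close> \<open>C1_fun g\<close> by (intro negligible_graph_over_hyperplane C1_fun_differentiable)
  ultimately have "negligible (frontier \<Omega> \<inter> ball p r)"
    by (rule negligible_subset[rotated])
  moreover have "openin (top_of_set (frontier \<Omega>)) (frontier \<Omega> \<inter> ball p r)"
    by (simp add: openin_open_Int)
  ultimately show "\<exists>U. openin (top_of_set (frontier \<Omega>)) U \<and> p \<in> U \<and> negligible U"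
    using p \<open>r > 0\<close> by force
qed

lemma set_integral_eq_if_negligible_frontier:
  fixes f :: "'a::euclidean_space \<Rightarrow> real"
  assumes "open \<Omega>" "negligible (frontier \<Omega>)" "A \<subseteq> closure \<Omega>"
    and "\<And>x. x \<in> \<Omega> \<Longrightarrow> x \<notin> A \<Longrightarrow> f x = 0"
  shows "(LINT x:\<Omega>|lebesgue. f x) = (LINT x:A|lebesgue. f x)"
  unfolding set_lebesgue_integral_def
proof (rule integral_cong_AE_lebesgue)
  have null: "frontier \<Omega> \<in> null_sets lebesgue"
    using assms(2) negligible_iff_null_sets by blast
  show "AE x in lebesgue. indicator \<Omega> x *\<^sub>R f x = indicator A x *\<^sub>R f x"
    using AE_not_in[OF null]
  proof eventually_elim
    case (elim x)
    show ?case
    proof (cases "x \<in> \<Omega>")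
      case True
      then show ?thesis using assms(4) by (cases "x \<in> A") simp_all
    next
      case False
      then have "x \<notin> closure \<Omega>" using elim assms(1) by (simp add: frontier_def interior_open)
      then have "x \<notin> A" using assms(3) by blast
      then show ?thesis using False by simp
    qed
  qed
qed

lemma Cc_inf_continuous:
  assumes "f \<in> Cc_inf A"
  shows "continuous_on S f"
proof -
  have "pdiff [] f differentiable (at x)" for x
    using assms unfolding Cc_inf_def smooth_def by blast
  then show ?thesis
    by (simp add: continuous_at_imp_continuous_on differentiable_imp_continuous_within)
qed

lemma Cc_inf_vanishes: "f \<in> Cc_inf A \<Longrightarrow> x \<notin> A \<Longrightarrow> f x = 0"
  using closure_subset[of "{x. f x \<noteq> 0}"] by (auto simp: Cc_inf_def tsupport_def)

lemma Fdens_rescale: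
  "Fdens (\<lambda>x G. (t x)\<^sup>2 * U x0 (t x *\<^sub>R G)) (\<lambda>x. (t x)\<^sup>2 *\<^sub>R L x0) x a G = Fdens U L x0 a (t x *\<^sub>R G)"
  unfolding Fdens_def
  by (simp add: blinfun.scaleR_right scaleR_blinfun.rep_eq power_mult_distrib algebra_simps
      power2_eq_square)

lemma Iint_rescale:
  "Iint (\<lambda>x G. (t x)\<^sup>2 * U x0 (t x *\<^sub>R G)) (\<lambda>x. (t x)\<^sup>2 *\<^sub>R L x0) x \<mu> \<nu>
     = (t x)\<^sup>2 * Iint (\<lambda>y G. U y (t x *\<^sub>R G)) L x0 \<mu> \<nu>"
proof -
  have "(\<lambda>F. indicator (sphere 0 1) F *\<^sub>R (((t x)\<^sup>2 *\<^sub>R L x0) F \<bullet> F))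
      = (\<lambda>F. (t x)\<^sup>2 * (indicator (sphere 0 1) F *\<^sub>R (L x0 F \<bullet> F)))"
    by (simp add: fun_eq_iff scaleR_blinfun.rep_eq)
  then show ?thesis
    unfolding Iint_def set_lebesgue_integral_def
    by (simp only: integral_mult_right_zero) (simp add: algebra_simps)
qed

lemma (in prob_space) abs_integral_le_const:
  fixes f :: "'a \<Rightarrow> real"
  assumes "AE x in M. \<bar>f x\<bar> \<le> B"
  shows "\<bar>\<integral>x. f x \<partial>M\<bar> \<le> B"
proof -
  have "\<bar>\<integral>x. f x \<partial>M\<bar> \<le> (\<integral>x. \<bar>f x\<bar> \<partial>M)" by (rule integral_abs_bound)
  also have "\<dots> \<le> (\<integral>x. B \<partial>M)"
  proof (rule integral_mono_AE')
    show "AE x in M. 0 \<le> B"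
      using assms by eventually_elim (meson abs_ge_zero order_trans)
  qed (use assms in simp_all)
  also have "\<dots> = B" by (simp add: prob_space)
  finally show ?thesis .
qed

lemma abs_set_integral_sphere_quadratic_form_le:
  fixes L :: "'a::real_inner \<Rightarrow>\<^sub>L 'a"
  assumes "prob_space \<nu>"
  shows "\<bar>LINT F:sphere 0 1|\<nu>. L F \<bullet> F\<bar> \<le> norm L"
  unfolding set_lebesgue_integral_def
proof (rule prob_space.abs_integral_le_const[OF assms], intro AE_I2)
  fix F :: 'a
  show "\<bar>indicator (sphere 0 1) F *\<^sub>R (L F \<bullet> F)\<bar> \<le> norm L"
  proof (cases "F \<in> sphere 0 1")
    case True
    have "\<bar>L F \<bullet> F\<bar> \<le> norm (L F) * norm F" by (rule Cauchy_Schwarz_ineq2)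
    also have "\<dots> \<le> norm L * norm F * norm F"
      by (intro mult_right_mono norm_blinfun) simp
    finally show ?thesis using True by simp
  qed simp
qed

lemma abs_Iint_le:
  assumes "prob_space \<mu>" "prob_space \<nu>" "AE F in \<mu>. \<bar>U x F\<bar> \<le> B"
  shows "\<bar>Iint U L x \<mu> \<nu>\<bar> \<le> B + norm (L x) / 2"
proof -
  have "\<bar>\<integral>F. U x F \<partial>\<mu>\<bar> \<le> B"
    using assms(1,3) by (rule prob_space.abs_integral_le_const)
  moreover have "\<bar>LINT F:sphere 0 1|\<nu>. L x F \<bullet> F\<bar> \<le> norm (L x)"
    using assms(2) by (rule abs_set_integral_sphere_quadratic_form_le)
  ultimately show ?thesis unfolding Iint_def by linarith
qed

lemma continuous_on_slice:
  assumes "continuous_on (S \<times> UNIV) (\<lambda>(x, y). f x y)" "a \<in> S"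
  shows "continuous_on UNIV (f a)"
proof -
  have "continuous_on UNIV (\<lambda>y. (\<lambda>(x, y). f x y) (a, y))"
    by (rule continuous_on_compose2[OF assms(1)]) (use assms(2) in \<open>auto intro!: continuous_intros\<close>)
  then show ?thesis by simp
qed

lemma continuous_on_abs_bounded_cball:
  fixes h :: "'a::heine_borel \<Rightarrow> real"
  assumes "continuous_on UNIV h"
  obtains B where "\<And>G. G \<in> cball c \<rho> \<Longrightarrow> \<bar>h G\<bar> \<le> B"
proof -
  have "compact (h ` cball c \<rho>)"
    by (intro compact_continuous_image continuous_on_subset[OF assms]) auto
  then obtain B where "\<forall>y \<in> h ` cball c \<rho>. norm y \<le> B"
    using compact_imp_bounded bounded_iff by metis
  then show thesis using that[of B] by simp
qed

lemma tendsto_integral_scaleR_arg: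
  fixes h :: "'b::euclidean_space \<Rightarrow> real"
  assumes "finite_measure N" "sets N = sets borel" "AE F in N. norm F \<le> R"
    and h: "continuous_on UNIV h" and t: "t \<longlonglongrightarrow> c"
  shows "(\<lambda>k. \<integral>F. h (t k *\<^sub>R F) \<partial>N) \<longlonglongrightarrow> (\<integral>F. h (c *\<^sub>R F) \<partial>N)"
proof -
  obtain K where "K > 0" and K: "\<And>k. \<bar>t k\<bar> \<le> K"
    using convergent_imp_Bseq[OF convergentI[OF t]] by (auto elim: BseqE)
  obtain B where B: "\<And>G. G \<in> cball 0 (K * R) \<Longrightarrow> \<bar>h G\<bar> \<le> B"
    using continuous_on_abs_bounded_cball[OF h] by blast
  have meas: "(\<lambda>F. h (s *\<^sub>R F)) \<in> borel_measurable N" for s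
  proof -
    have "continuous_on UNIV (\<lambda>F. h (s *\<^sub>R F))"
      by (intro continuous_on_compose2[OF h] continuous_intros) auto
    then show ?thesis
      using measurable_cong_sets[OF assms(2) refl] borel_measurable_continuous_onI by blast
  qed
  show ?thesis
  proof (rule integral_dominated_convergence[where w="\<lambda>_. B"])
    show "AE F in N. (\<lambda>k. h (t k *\<^sub>R F)) \<longlonglongrightarrow> h (c *\<^sub>R F)"
      using h t by (intro AE_I2 isCont_tendsto_compose[of _ h] tendsto_intros)
        (auto simp: continuous_on_eq_continuous_at)
    show "AE F in N. norm (h (t k *\<^sub>R F)) \<le> B" for k
      using assms(3)
    proof eventually_elim
      case (elim F)
      have "\<bar>t k\<bar> * norm F \<le> K * R" using K elim \<open>K > 0\<close> by (intro mult_mono) auto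
      then show ?case using B by simp
    qed
  qed (use meas finite_measure.integrable_const[OF assms(1)] in auto)
qed

lemma tendsto_Iint_scaleR_arg:
  assumes "finite_measure \<mu>" "sets \<mu> = sets borel" "AE F in \<mu>. norm F \<le> R"
    and "continuous_on UNIV (U x)" "t \<longlonglongrightarrow> c"
  shows "(\<lambda>k. Iint (\<lambda>y G. U y (t k *\<^sub>R G)) L x \<mu> \<nu>) \<longlonglongrightarrow> Iint (\<lambda>y G. U y (c *\<^sub>R G)) L x \<mu> \<nu>"
  unfolding Iint_def by (intro tendsto_intros tendsto_integral_scaleR_arg[OF assms])

lemma repr_measures_base:
  assumes "repr_measures \<Omega> \<alpha> Dv R \<pi> \<mu> \<nu>"
  shows "sets \<pi> = sets borel" "finite_measure \<pi>" "AE x in \<pi>. x \<in> closure \<Omega>"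
proof -
  show sets: "sets \<pi> = sets borel" and "finite_measure \<pi>"
    using assms unfolding repr_measures_def by blast+
  have "- closure \<Omega> \<in> null_sets \<pi>"
    using assms sets unfolding repr_measures_def by (simp add: null_sets_def)
  from AE_not_in[OF this] show "AE x in \<pi>. x \<in> closure \<Omega>" by simp
qed

lemma repr_measures_fiber:
  assumes "repr_measures \<Omega> \<alpha> Dv R \<pi> \<mu> \<nu>" "x \<in> closure \<Omega>"
  shows "prob_space (\<mu> x)" "sets (\<mu> x) = sets borel" "AE F in \<mu> x. norm F \<le> R"
    and "prob_space (\<nu> x)"
proof -
  show "prob_space (\<mu> x)" and sets: "sets (\<mu> x) = sets borel" and "prob_space (\<nu> x)"
    using assms unfolding repr_measures_def by blast+
  have "- cball 0 R \<in> null_sets (\<mu> x)"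
    using assms sets unfolding repr_measures_def by (simp add: null_sets_def)
  from AE_not_in[OF this] show "AE F in \<mu> x. norm F \<le> R" by simp
qed

lemma
  fixes U :: "real^'d \<Rightarrow> real^'d^'m \<Rightarrow> real"
  assumes repr: "repr_measures \<Omega> \<alpha> Dv R \<pi> \<mu> \<nu>"
    and U: "continuous_on UNIV (U x0)" "U x0 0 = 0"
    and \<theta>: "continuous_on (closure \<Omega>) \<theta>"
  shows repr_measures_rescaled_integrable:
      "integrable \<pi> (\<lambda>x. (\<theta> x)\<^sup>2 * Iint (\<lambda>y G. U y (\<theta> x *\<^sub>R G)) L x0 (\<mu> x) (\<nu> x))"
    and repr_measures_rescaled_tendsto:
      "(\<lambda>n. LINT x:\<Omega>|lebesgue. Fdens U L x0 (\<alpha> n) (\<theta> x *\<^sub>R Dv n x))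
         \<longlonglongrightarrow> (\<integral>x. (\<theta> x)\<^sup>2 * Iint (\<lambda>y G. U y (\<theta> x *\<^sub>R G)) L x0 (\<mu> x) (\<nu> x) \<partial>\<pi>)"
proof -
  define U\<theta> where "U\<theta> x G = (\<theta> x)\<^sup>2 * U x0 (\<theta> x *\<^sub>R G)" for x G
  define L\<theta> where "L\<theta> x = (\<theta> x)\<^sup>2 *\<^sub>R L x0" for x
  have \<theta>_fst: "continuous_on (closure \<Omega> \<times> UNIV) (\<lambda>p::(real^'d) \<times> (real^'d^'m). \<theta> (fst p))"
    by (rule continuous_on_compose2[OF \<theta>]) (auto intro: continuous_intros)
  have "continuous_on (closure \<Omega> \<times> UNIV) (\<lambda>p. U x0 (\<theta> (fst p) *\<^sub>R snd p))"
    by (rule continuous_on_compose2[OF U(1)]) (auto intro!: continuous_intros \<theta>_fst)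
  then have "continuous_on (closure \<Omega> \<times> UNIV) (\<lambda>(x, G). U\<theta> x G)"
    unfolding U\<theta>_def case_prod_unfold by (intro continuous_intros \<theta>_fst)
  moreover have "continuous_on (closure \<Omega>) L\<theta>"
    unfolding L\<theta>_def by (intro continuous_intros \<theta>)
  moreover have "\<forall>x\<in>closure \<Omega>. U\<theta> x 0 = 0"
    unfolding U\<theta>_def using U(2) by simp
  ultimately have "integrable \<pi> (\<lambda>x. Iint U\<theta> L\<theta> x (\<mu> x) (\<nu> x))"
    and "(\<lambda>n. LINT x:\<Omega>|lebesgue. 1 * Fdens U\<theta> L\<theta> x (\<alpha> n) (Dv n x))
           \<longlonglongrightarrow> (\<integral>x. 1 * Iint U\<theta> L\<theta> x (\<mu> x) (\<nu> x) \<partial>\<pi>)"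
    using repr continuous_on_const unfolding repr_measures_def by blast+
  then show "integrable \<pi> (\<lambda>x. (\<theta> x)\<^sup>2 * Iint (\<lambda>y G. U y (\<theta> x *\<^sub>R G)) L x0 (\<mu> x) (\<nu> x))"
    and "(\<lambda>n. LINT x:\<Omega>|lebesgue. Fdens U L x0 (\<alpha> n) (\<theta> x *\<^sub>R Dv n x))
           \<longlonglongrightarrow> (\<integral>x. (\<theta> x)\<^sup>2 * Iint (\<lambda>y G. U y (\<theta> x *\<^sub>R G)) L x0 (\<mu> x) (\<nu> x) \<partial>\<pi>)"
    unfolding U\<theta>_def L\<theta>_def Fdens_rescale Iint_rescale by simp_all
qed

lemma repr_measures_rescaled_tendsto_localized:
  assumes repr: "repr_measures \<Omega> \<alpha> Dv R \<pi> \<mu> \<nu>"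
    and U: "continuous_on UNIV (U x0)" "U x0 0 = 0"
    and \<Omega>: "open \<Omega>" "negligible (frontier \<Omega>)"
    and \<theta>: "continuous_on (closure \<Omega>) \<theta>" "\<And>x. x \<in> \<Omega> \<Longrightarrow> x \<notin> A \<Longrightarrow> \<theta> x = 0"
    and A: "A \<subseteq> closure \<Omega>"
  shows "(\<lambda>n. LINT x:A|lebesgue. Fdens U L x0 (\<alpha> n) (\<theta> x *\<^sub>R Dv n x))
           \<longlonglongrightarrow> (\<integral>x. (\<theta> x)\<^sup>2 * Iint (\<lambda>y G. U y (\<theta> x *\<^sub>R G)) L x0 (\<mu> x) (\<nu> x) \<partial>\<pi>)"
proof -
  have "(LINT x:\<Omega>|lebesgue. Fdens U L x0 (\<alpha> n) (\<theta> x *\<^sub>R Dv n x))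
      = (LINT x:A|lebesgue. Fdens U L x0 (\<alpha> n) (\<theta> x *\<^sub>R Dv n x))" for n
    using \<theta>(2) by (intro set_integral_eq_if_negligible_frontier[OF \<Omega> A]) (simp add: Fdens_def)
  then show ?thesis
    using repr_measures_rescaled_tendsto[where U=U and ?x0.0=x0 and L=L, OF repr U \<theta>(1)] by simp
qed

lemma repr_measures_rescaled_tendsto_indicator:
  assumes repr: "repr_measures \<Omega> \<alpha> Dv R \<pi> \<mu> \<nu>"
    and U: "continuous_on UNIV (U x0)" "U x0 0 = 0"
    and \<theta>_cont: "\<And>k. continuous_on (closure \<Omega>) (\<theta> k)" and M: "\<And>k x. \<bar>\<theta> k x\<bar> \<le> M"
    and \<theta>_lim: "\<And>x. x \<in> closure \<Omega> \<Longrightarrow> (\<lambda>k. \<theta> k x) \<longlonglongrightarrow> indicator A x"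
    and A: "A \<in> sets borel"
  shows "(\<lambda>k. \<integral>x. (\<theta> k x)\<^sup>2 * Iint (\<lambda>y G. U y (\<theta> k x *\<^sub>R G)) L x0 (\<mu> x) (\<nu> x) \<partial>\<pi>)
           \<longlonglongrightarrow> (LINT x:A|\<pi>. Iint U L x0 (\<mu> x) (\<nu> x))"
proof -
  define I where "I k x = (\<theta> k x)\<^sup>2 * Iint (\<lambda>y G. U y (\<theta> k x *\<^sub>R G)) L x0 (\<mu> x) (\<nu> x)" for k x
  have "0 \<le> M" using M[of 0 undefined] by (meson abs_ge_zero order_trans)
  obtain B where B: "\<And>G. G \<in> cball 0 (M * R) \<Longrightarrow> \<bar>U x0 G\<bar> \<le> B"
    using continuous_on_abs_bounded_cball[OF U(1)] by blast
  have bound: "\<bar>I k x\<bar> \<le> M\<^sup>2 * (B + norm (L x0) / 2)" if "x \<in> closure \<Omega>" for k x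
  proof -
    note fiber = repr_measures_fiber[OF repr that]
    have "AE F in \<mu> x. \<bar>U x0 (\<theta> k x *\<^sub>R F)\<bar> \<le> B"
      using fiber(3)
    proof eventually_elim
      case (elim F)
      have "\<bar>\<theta> k x\<bar> * norm F \<le> M * R" using M elim \<open>0 \<le> M\<close> by (intro mult_mono) auto
      then show ?case using B by simp
    qed
    then have "\<bar>Iint (\<lambda>y G. U y (\<theta> k x *\<^sub>R G)) L x0 (\<mu> x) (\<nu> x)\<bar> \<le> B + norm (L x0) / 2"
      using abs_Iint_le[OF fiber(1,4)] by simp
    moreover have "(\<theta> k x)\<^sup>2 \<le> M\<^sup>2"
      using M[of k x] \<open>0 \<le> M\<close> by (simp add: abs_le_square_iff[symmetric])
    ultimately show ?thesis unfolding I_def abs_mult by (intro mult_mono) auto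
  qed
  have lim: "(\<lambda>k. I k x) \<longlonglongrightarrow> indicator A x * Iint U L x0 (\<mu> x) (\<nu> x)" if "x \<in> closure \<Omega>" for x
  proof -
    note fiber = repr_measures_fiber[OF repr that]
    have "(\<lambda>k. I k x) \<longlonglongrightarrow>
        (indicator A x)\<^sup>2 * Iint (\<lambda>y G. U y (indicator A x *\<^sub>R G)) L x0 (\<mu> x) (\<nu> x)"
      unfolding I_def using prob_space.finite_measure[OF fiber(1)] fiber(2,3) U(1) \<theta>_lim[OF that]
      by (intro tendsto_intros tendsto_Iint_scaleR_arg)
    then show ?thesis by (cases "x \<in> A") simp_all
  qed
  have "integrable \<pi> (\<lambda>x. Iint U L x0 (\<mu> x) (\<nu> x))"
    using repr_measures_rescaled_integrable[where U=U and ?x0.0=x0 and \<theta>="\<lambda>_. 1", OF repr U]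
    by simp
  then have "(\<lambda>x. indicator A x *\<^sub>R Iint U L x0 (\<mu> x) (\<nu> x)) \<in> borel_measurable \<pi>"
    using A repr_measures_base(1)[OF repr] by measurable
  have "(\<lambda>k. integral\<^sup>L \<pi> (I k)) \<longlonglongrightarrow> (\<integral>x. indicator A x *\<^sub>R Iint U L x0 (\<mu> x) (\<nu> x) \<partial>\<pi>)"
  proof (rule integral_dominated_convergence[where w="\<lambda>_. M\<^sup>2 * (B + norm (L x0) / 2)"])
    show "AE x in \<pi>. (\<lambda>k. I k x) \<longlonglongrightarrow> indicator A x *\<^sub>R Iint U L x0 (\<mu> x) (\<nu> x)"
      using repr_measures_base(3)[OF repr] by eventually_elim (simp add: lim)
    show "AE x in \<pi>. norm (I k x) \<le> M\<^sup>2 * (B + norm (L x0) / 2)" for k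
      using repr_measures_base(3)[OF repr] by eventually_elim (simp add: bound)
    show "I k \<in> borel_measurable \<pi>" for k
      using repr_measures_rescaled_integrable[where U=U and ?x0.0=x0, OF repr U \<theta>_cont]
      unfolding I_def by simp
  qed (use \<open>_ \<in> borel_measurable \<pi>\<close> finite_measure.integrable_const repr_measures_base(2)[OF repr]
       in auto)
  then show ?thesis unfolding I_def set_lebesgue_integral_def .
qed

theorem lemma8p4:
  fixes \<Omega> :: "(real^'d) set" and \<Omega>1 :: "(real^'d) set"
    and U :: "real^'d \<Rightarrow> real^'d^'m \<Rightarrow> real"
    and L :: "real^'d \<Rightarrow> ((real^'d^'m) \<Rightarrow>\<^sub>L (real^'d^'m))"
    and v :: "nat \<Rightarrow> real^'d \<Rightarrow> real^'m" and Dv :: "nat \<Rightarrow> real^'d \<Rightarrow> real^'d^'m"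
    and \<alpha> :: "nat \<Rightarrow> real" and R :: real
    and \<pi> :: "(real^'d) measure" and \<mu> \<nu> :: "real^'d \<Rightarrow> (real^'d^'m) measure"
    and x0 :: "real^'d" and r :: real and \<theta> :: "nat \<Rightarrow> real^'d \<Rightarrow> real"
  assumes dom: "open \<Omega>" "connected \<Omega>" "bounded \<Omega>" "C1_boundary \<Omega>"
    and bdry1: "\<Omega>1 \<subseteq> frontier \<Omega>" "openin (top_of_set (frontier \<Omega>)) \<Omega>1"
    and U_cont: "continuous_on (closure \<Omega> \<times> UNIV) (\<lambda>(x, G). U x G)"
    and U_zero: "\<forall>x\<in>closure \<Omega>. U x 0 = 0"
    and L_cont: "continuous_on (closure \<Omega>) L"
    and weak: "W12_weak_to_zero \<Omega> v Dv"
    and alpha_pos: "\<forall>n. \<alpha> n > 0"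
    and bound: "\<exists>C. \<forall>n. esssup (lebesgue_on \<Omega>) (\<lambda>x. ereal (norm (\<alpha> n *\<^sub>R v n x))) \<le> ereal C \<and>
                       esssup (lebesgue_on \<Omega>) (\<lambda>x. ereal (norm (\<alpha> n *\<^sub>R Dv n x))) \<le> ereal C"
    and R_def: "ereal R = (SUP n. esssup (lebesgue_on \<Omega>) (\<lambda>x. ereal (norm (\<alpha> n *\<^sub>R Dv n x))))"
    and repr: "repr_measures \<Omega> \<alpha> Dv R \<pi> \<mu> \<nu>"
    and x0: "x0 \<in> \<Omega> \<union> closure \<Omega>1" and r: "r > 0"
    and theta_test: "\<forall>k. \<theta> k \<in> Cc_inf (ball x0 r)"
    and theta_bdd: "\<exists>M. \<forall>k x. \<bar>\<theta> k x\<bar> \<le> M"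
    and theta_lim: "\<forall>x\<in>closure \<Omega>. (\<lambda>k. \<theta> k x) \<longlonglongrightarrow> indicator (ball x0 r \<inter> closure \<Omega>) x"
  shows "\<exists>lim_in::nat \<Rightarrow> real.
     (\<forall>k. (\<lambda>n. LINT x:(ball x0 r \<inter> closure \<Omega>)|lebesgue. Fdens U L x0 (\<alpha> n) (\<theta> k x *\<^sub>R Dv n x))
            \<longlonglongrightarrow> lim_in k) \<and>
     lim_in \<longlonglongrightarrow> (LINT x:(ball x0 r \<inter> closure \<Omega>)|\<pi>.
                 (\<integral>F. U x0 F \<partial>\<mu> x) + 1/2 * (LINT F:sphere 0 1|\<nu> x. L x0 F \<bullet> F))"
proof -
  have "closure \<Omega>1 \<subseteq> frontier \<Omega>"
    using bdry1(1) frontier_closed by (rule closure_minimal)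
  then have x0_closure: "x0 \<in> closure \<Omega>"
    using x0 closure_subset by (auto simp: frontier_def)
  have U: "continuous_on UNIV (U x0)" "U x0 0 = 0"
    using continuous_on_slice[OF U_cont x0_closure] U_zero x0_closure by simp_all
  obtain M where M: "\<And>k x. \<bar>\<theta> k x\<bar> \<le> M" using theta_bdd by blast
  have \<theta>_cont: "continuous_on (closure \<Omega>) (\<theta> k)" for k
    using theta_test Cc_inf_continuous by blast
  have neg: "negligible (frontier \<Omega>)"
    using dom(1,4) by (rule negligible_frontier_C1_boundary)
  define lim_in where
    "lim_in k = (\<integral>x. (\<theta> k x)\<^sup>2 * Iint (\<lambda>y G. U y (\<theta> k x *\<^sub>R G)) L x0 (\<mu> x) (\<nu> x) \<partial>\<pi>)" for k
  have "(\<lambda>n. LINT x:(ball x0 r \<inter> closure \<Omega>)|lebesgue. Fdens U L x0 (\<alpha> n) (\<theta> k x *\<^sub>R Dv n x))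
      \<longlonglongrightarrow> lim_in k" for k
    using theta_test closure_subset[of \<Omega>] unfolding lim_in_def
    by (intro repr_measures_rescaled_tendsto_localized[where U=U and ?x0.0=x0, OF repr U dom(1) neg
          \<theta>_cont]) (auto intro: Cc_inf_vanishes)
  moreover have "lim_in \<longlonglongrightarrow> (LINT x:(ball x0 r \<inter> closure \<Omega>)|\<pi>. Iint U L x0 (\<mu> x) (\<nu> x))"
    using theta_lim unfolding lim_in_def
    by (intro repr_measures_rescaled_tendsto_indicator[where U=U and ?x0.0=x0, OF repr U \<theta>_cont M])
      auto
  ultimately show ?thesis unfolding Iint_def by blast
qed

end
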